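(* In the setting described in the context, let $\rho\in\widehat\Lambda$, $\chi\in\widehat\Gamma$, assume that $q_{ii}$ is not a root of unity for all $1\le i\le n$ and that $q_{ij}q_{ji}=1$ for all $1\le i,j\le n$ with $i\ne j$. Then for all integers $t_1,\dots,t_n\ge0$, $$(u_1^{t_1}\cdots u_n^{t_n})\cdot_\rho\widetilde\chi=\prod_{i=1}^n\prod_{l_i=0}^{t_i-1}\big(1-q_{ii}^{l_i}\rho(z_i)\chi(g_i)\big)\,\Phi(u_1^{t_1}\cdots u_n^{t_n})\widetilde\chi .$$
   Context: $k$ is an algebraically closed field of characteristic zero; for an abelian group $G$, $\widehat G$ is its group of characters $G\to k^\times$. A Yetter–Drinfeld module over $k[G]$ is a $G$-graded vector space $X=\bigoplus_g X_g$ with a $G$-action preserving each $X_g$; $X_g^{\psi}=\{x\in X_g: h\cdot x=\psi(h)x\ \forall h\}$; braiding $c(x\otimes y)=(g\cdot y)\otimes x$ for $x\in X_g$. The Nichols algebra $\mathfrak B(X)$ is the unique connected $\mathbb N$-graded braided Hopf algebra in this category generated by its degree-one part $\cong X$, which equals its space of primitive elements. The smash product $\mathfrak B(X)\#k[G]$ is the Hopf algebra containing $\mathfrak B(X)$ and $k[G]$ as subalgebras, with $gxg^{-1}=\psi(g)x$, $\Delta(x)=g'\otimes x+x\otimes1$ for $x\in X_{g'}^{\psi}$, and $\Delta(g)=g\otimes g$. Setting: $\Lambda,\Gamma$ abelian groups, $n\ge1$, $z_1,\dots,z_n\in\Lambda$, $g_1,\dots,g_n\in\Gamma$, nontrivial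 characters $\eta_1,\dots,\eta_n\in\widehat\Lambda$, $\chi_1,\dots,\chi_n\in\widehat\Gamma$. $W$ is the Yetter–Drinfeld module over $k[\Lambda]$ with basis $u_i\in W_{z_i}^{\eta_i}$, $V$ the one over $k[\Gamma]$ with basis $a_i\in V_{g_i}^{\chi_i}$; $U=\mathfrak B(W)\#k[\Lambda]$, $A=\mathfrak B(V)\#k[\Gamma]$; $q_{ij}=\eta_j(z_i)$. For $\psi\in\widehat\Gamma$ (resp. $\widehat\Lambda$), $\widetilde\psi$ is the algebra map $A\to k$ (resp. $U\to k$) with $\widetilde\psi(g)=\psi(g)$ and vanishing on the $a_j$ (resp. $u_j$). Let $\varphi:\Lambda\to\widehat\Gamma$ be a group homomorphism with $\varphi(z_i)=\chi_i^{-1}$ and $\eta_i(z)=\varphi(z)(g_i)$ for all $i$ and $z\in\Lambda$, and let $l_1,\dots,l_n\in k$ be nonzero. Then there is a Hopf algebra map $\Phi:U\to A^{o\,\mathrm{cop}}$ with $\Phi(z)=\widetilde{\varphi(z)}$, $\Phi(u_i)(g)=0$, $\Phi(u_i)(a_j)=\delta_{ij}l_i$. The dual $A^*$ is an algebra under convolution $(pq)(a)=p(a_{(1)})q(a_{(2)})$. For $\rho\in\widehat\Lambda$, $U$ acts on $A^*$ by $u\cdot_\rho p=\Phi(u_{(1)})\,\widetilde\rho(u_{(2)})\,p\,\Phi(S(u_{(3)}))$ (products in $A^*$). *)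

theory Defs
  imports "HOL-Computational_Algebra.Polynomial"
begin

text \<open>Abelian groups are written additively (type class ab_group_add).
  A basis element of the smash product T(X)#k[G] is a pair (w, g) standing for
  x_{w_1} ... x_{w_m} g  (letters indexed 0..<n).  The full linear dual is the
  type of all functions (nat list * 'g) => 'k.\<close>

definition is_char :: "('g::ab_group_add \<Rightarrow> 'k::field) \<Rightarrow> bool" where
  "is_char \<psi> \<longleftrightarrow> (\<forall>a b. \<psi> (a + b) = \<psi> a * \<psi> b) \<and> (\<forall>a. \<psi> a \<noteq> 0)"

definition alg_closed_field :: "'k::field itself \<Rightarrow> bool" where
  "alg_closed_field _ \<longleftrightarrow> (\<forall>p :: 'k poly. degree p > 0 \<longrightarrow> (\<exists>x. poly p x = 0))"

text \<open>Coproduct of a basis element x_{w} h of T(X)#k[G], where x_i has degree gr i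
  and weight ch i:  Delta(x_i) = gr i \<otimes> x_i + x_i \<otimes> 1,  Delta(h) = h \<otimes> h,
  and h x_i = ch i h x_i h.\<close>
fun bcop :: "(nat \<Rightarrow> 'g::ab_group_add) \<Rightarrow> (nat \<Rightarrow> 'g \<Rightarrow> 'k::comm_ring_1) \<Rightarrow> nat list \<Rightarrow> 'g
    \<Rightarrow> ('k \<times> (nat list \<times> 'g) \<times> (nat list \<times> 'g)) list" where
  "bcop gr ch [] h = [(1, ([], h), ([], h))]"
| "bcop gr ch (i # w) h =
     concat (map (\<lambda>(c, (w1, h1), (w2, h2)).
        [(c, (i # w1, h1), (w2, h2)),
         (c * prod_list (map (\<lambda>j. ch j (gr i)) w1), (w1, gr i + h1), (i # w2, h2))])
      (bcop gr ch w h))"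

definition conv :: "(nat \<Rightarrow> 'g::ab_group_add) \<Rightarrow> (nat \<Rightarrow> 'g \<Rightarrow> 'k::comm_ring_1)
    \<Rightarrow> (nat list \<times> 'g \<Rightarrow> 'k) \<Rightarrow> (nat list \<times> 'g \<Rightarrow> 'k) \<Rightarrow> (nat list \<times> 'g \<Rightarrow> 'k)" where
  "conv gr ch p q x = sum_list (map (\<lambda>(c, x1, x2). c * p x1 * q x2) (bcop gr ch (fst x) (snd x)))"

definition tld :: "('g \<Rightarrow> 'k::zero) \<Rightarrow> nat list \<times> 'g \<Rightarrow> 'k" where
  "tld \<psi> x = (if fst x = [] then \<psi> (snd x) else 0)"

text \<open>Phi(u_i) as an element of A^*: Phi(u_i)(a_j g) = delta_ij l_i phi(z_i)(g), zero on all
  other basis monomials (forced by Delta(Phi(u_i)) in A^{o cop}).\<close>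
definition Phi_u :: "(nat \<Rightarrow> 'k::comm_ring_1) \<Rightarrow> ('l \<Rightarrow> 'g \<Rightarrow> 'k) \<Rightarrow> (nat \<Rightarrow> 'l) \<Rightarrow> nat
    \<Rightarrow> nat list \<times> 'g \<Rightarrow> 'k" where
  "Phi_u l \<phi> z i x = (if fst x = [i] then l i * \<phi> (z i) (snd x) else 0)"

text \<open>Phi on a basis element u_{w_1}...u_{w_m} lambda (Phi is an algebra map).\<close>
definition PhiU :: "(nat \<Rightarrow> 'g::ab_group_add) \<Rightarrow> (nat \<Rightarrow> 'g \<Rightarrow> 'k::comm_ring_1) \<Rightarrow> (nat \<Rightarrow> 'k)
    \<Rightarrow> ('l \<Rightarrow> 'g \<Rightarrow> 'k) \<Rightarrow> (nat \<Rightarrow> 'l) \<Rightarrow> nat list \<times> 'l \<Rightarrow> (nat list \<times> 'g \<Rightarrow> 'k)" where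
  "PhiU gs chis l \<phi> z x = foldr (conv gs chis) (map (Phi_u l \<phi> z) (fst x)) (tld (\<phi> (snd x)))"

text \<open>Antipode of T(W)#k[Lambda] on a basis element: a scalar times a basis element.
  S(lambda) = -lambda, S(u_i) = -(-z_i) u_i, S anti-multiplicative.\<close>
fun antip :: "(nat \<Rightarrow> 'l::ab_group_add) \<Rightarrow> (nat \<Rightarrow> 'l \<Rightarrow> 'k::comm_ring_1) \<Rightarrow> nat list \<Rightarrow> 'l
    \<Rightarrow> 'k \<times> (nat list \<times> 'l)" where
  "antip z eta [] lam = (1, ([], - lam))"
| "antip z eta (i # w) lam =
     (case antip z eta w lam of (c, (v, \<mu>)) \<Rightarrow> (- c * eta i (\<mu> - z i), (v @ [i], \<mu> - z i)))"

text \<open>The action  u .rho p = Phi(u_(1)) rho~(u_(2)) p Phi(S(u_(3)))  for a basis element u of U.\<close>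
definition act :: "(nat \<Rightarrow> 'l::ab_group_add) \<Rightarrow> (nat \<Rightarrow> 'l \<Rightarrow> 'k::comm_ring_1)
    \<Rightarrow> (nat \<Rightarrow> 'g::ab_group_add) \<Rightarrow> (nat \<Rightarrow> 'g \<Rightarrow> 'k) \<Rightarrow> (nat \<Rightarrow> 'k) \<Rightarrow> ('l \<Rightarrow> 'g \<Rightarrow> 'k)
    \<Rightarrow> ('l \<Rightarrow> 'k) \<Rightarrow> nat list \<times> 'l \<Rightarrow> (nat list \<times> 'g \<Rightarrow> 'k) \<Rightarrow> (nat list \<times> 'g \<Rightarrow> 'k)" where
  "act z eta gs chis l \<phi> \<rho> u p = (\<lambda>x.
     sum_list (map (\<lambda>(c, x1, y).
       sum_list (map (\<lambda>(c', x2, x3).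
         (case antip z eta (fst x3) (snd x3) of (d, s) \<Rightarrow>
           c * c' * tld \<rho> x2 * d *
           conv gs chis (conv gs chis (PhiU gs chis l \<phi> z x1) p) (PhiU gs chis l \<phi> z s) x))
         (bcop z eta (fst y) (snd y))))
     (bcop z eta (fst u) (snd u))))"

definition mono :: "nat \<Rightarrow> (nat \<Rightarrow> nat) \<Rightarrow> nat list" where
  "mono n t = concat (map (\<lambda>i. replicate (t i) i) [0..<n])"

end

theory Submission
  imports Defs
begin

text \<open>Evaluating a convolution at a word \<open>a\<^sub>k w\<close> obeys a twisted Leibniz rule. From it,
  convolution is associative, \<open>\<psi>~\<close> commutes with \<open>\<Phi>(u\<^sub>i)\<close> up to \<open>\<psi>(g\<^sub>i)\<close>, and \<open>\<Phi>(u\<^sub>i)\<close>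
  commutes with \<open>\<Phi>(u\<^sub>j)\<close> up to \<open>q\<^sub>j\<^sub>i\<close>. Splitting the coproduct of \<open>u\<^sub>i v\<close> according to
  where \<open>u\<^sub>i\<close> goes gives \<open>u\<^sub>i \<cdot> p = \<Phi>(u\<^sub>i) p - \<rho>(z\<^sub>i) \<Phi>(z\<^sub>i) p \<Phi>(z\<^sub>i\<^sup>-\<^sup>1) \<Phi>(u\<^sub>i)\<close>.
  For \<open>p = \<Phi>(u\<^sub>v) \<chi>~\<close>, moving \<open>\<Phi>(u\<^sub>i)\<close> back to the front costs \<open>\<chi>(g\<^sub>i) q\<^sub>i\<^sub>i\<^sup>c\<close>, where
  \<open>c\<close> counts the letters \<open>i\<close> in \<open>v\<close>; the off-diagonal factors cancel because
  \<open>q\<^sub>i\<^sub>j q\<^sub>j\<^sub>i = 1\<close>. So, by induction on the word, each letter contributes a factor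
  \<open>1 - q\<^sub>i\<^sub>i\<^sup>c \<rho>(z\<^sub>i) \<chi>(g\<^sub>i)\<close>.\<close>

lemma pair_ext: "(\<And>w h. f (w, h) = g (w, h)) \<Longrightarrow> f = g"
  by (rule ext) (metis prod.collapse)

lemma sum_list_map_concat_map:
  "sum_list (map f (concat (map g xs))) = sum_list (map (\<lambda>x. sum_list (map f (g x))) xs)"
  by (induction xs) auto

text \<open>For \<open>x = a\<^sub>w h\<close>: \<open>lder k p x = p(a\<^sub>k x)\<close> and \<open>twist ch g p x = p(g x)\<close>, since
  \<open>g a\<^sub>w = (\<Prod>j\<in>w. ch j g) a\<^sub>w g\<close>.\<close>
definition lder :: "nat \<Rightarrow> (nat list \<times> 'g \<Rightarrow> 'k) \<Rightarrow> nat list \<times> 'g \<Rightarrow> 'k" where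
  "lder k p = (\<lambda>x. p (k # fst x, snd x))"

definition twist :: "(nat \<Rightarrow> 'g::ab_group_add \<Rightarrow> 'k::comm_ring_1) \<Rightarrow> 'g
    \<Rightarrow> (nat list \<times> 'g \<Rightarrow> 'k) \<Rightarrow> nat list \<times> 'g \<Rightarrow> 'k" where
  "twist ch g p = (\<lambda>x. prod_list (map (\<lambda>j. ch j g) (fst x)) * p (fst x, g + snd x))"

lemma conv_Nil: "conv gr ch p q ([], h) = p ([], h) * q ([], h)"
  by (simp add: conv_def)

lemma conv_Cons:
  "conv gr ch p q (k # w, h)
     = conv gr ch (lder k p) q (w, h) + conv gr ch (twist ch (gr k) p) (lder k q) (w, h)"
  unfolding conv_def lder_def twist_def
  by (simp add: sum_list_addf[symmetric] split_def o_def mult.assoc sum_list_map_concat_map)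

lemma conv_zero_left: "conv gr ch (\<lambda>_. 0) q = (\<lambda>_. 0)"
  by (simp add: fun_eq_iff conv_def split_def)

lemma conv_zero_right: "conv gr ch p (\<lambda>_. 0) = (\<lambda>_. 0)"
  by (simp add: fun_eq_iff conv_def split_def)

lemma conv_add_left:
  "conv gr ch (\<lambda>y. p y + p' y) q = (\<lambda>x. conv gr ch p q x + conv gr ch p' q x)"
  by (simp add: fun_eq_iff conv_def split_def sum_list_addf[symmetric] algebra_simps)

lemma conv_add_right:
  "conv gr ch p (\<lambda>y. q y + q' y) = (\<lambda>x. conv gr ch p q x + conv gr ch p q' x)"
  by (simp add: fun_eq_iff conv_def split_def sum_list_addf[symmetric] algebra_simps)

lemma conv_smult_left: "conv gr ch (\<lambda>y. c * p y) q = (\<lambda>x. c * conv gr ch p q x)"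
  by (simp add: fun_eq_iff conv_def split_def sum_list_const_mult[symmetric] algebra_simps)

lemma conv_smult_right: "conv gr ch p (\<lambda>y. c * q y) = (\<lambda>x. c * conv gr ch p q x)"
  by (simp add: fun_eq_iff conv_def split_def sum_list_const_mult[symmetric] algebra_simps)

lemma conv_sum_list_left:
  "conv gr ch (\<lambda>y. sum_list (map (\<lambda>a. F a y) xs)) q
    = (\<lambda>x. sum_list (map (\<lambda>a. conv gr ch (F a) q x) xs))"
  by (induction xs) (simp_all add: conv_zero_left conv_add_left)

lemma conv_sum_list_right:
  "conv gr ch p (\<lambda>y. sum_list (map (\<lambda>a. F a y) xs))
    = (\<lambda>x. sum_list (map (\<lambda>a. conv gr ch p (F a) x) xs))"
  by (induction xs) (simp_all add: conv_zero_right conv_add_right)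

lemma lder_conv:
  "lder k (conv gr ch p q)
    = (\<lambda>y. conv gr ch (lder k p) q y + conv gr ch (twist ch (gr k) p) (lder k q) y)"
  by (rule ext) (simp add: lder_def conv_Cons[of gr ch p q k "fst _" "snd _", simplified])

lemma lder_twist: "lder k (twist ch g p) = (\<lambda>y. ch k g * twist ch g (lder k p) y)"
  by (rule ext) (simp add: lder_def twist_def)

lemma twist_twist: "twist ch g (twist ch g' p) = twist ch g' (twist ch g p)"
  by (rule ext) (simp add: twist_def algebra_simps)

lemma twist_conv: "twist ch g (conv gr ch p q) = conv gr ch (twist ch g p) (twist ch g q)"
proof (rule pair_ext)
  fix w h
  show "twist ch g (conv gr ch p q) (w, h) = conv gr ch (twist ch g p) (twist ch g q) (w, h)"
  proof (induction w arbitrary: p q h)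
    case Nil
    then show ?case by (simp add: twist_def conv_Nil)
  next
    case (Cons k w)
    have "twist ch g (conv gr ch p q) (k # w, h)
        = ch k g * (twist ch g (conv gr ch (lder k p) q) (w, h)
                    + twist ch g (conv gr ch (twist ch (gr k) p) (lder k q)) (w, h))"
      by (simp add: twist_def conv_Cons algebra_simps)
    also have "\<dots> = ch k g * (conv gr ch (twist ch g (lder k p)) (twist ch g q) (w, h)
                    + conv gr ch (twist ch g (twist ch (gr k) p)) (twist ch g (lder k q)) (w, h))"
      using Cons by simp
    also have "\<dots> = conv gr ch (twist ch g p) (twist ch g q) (k # w, h)"
      by (simp add: conv_Cons lder_twist conv_smult_left conv_smult_right twist_twist algebra_simps)
    finally show ?case .
  qed
qed

lemma conv_assoc: "conv gr ch (conv gr ch p q) r = conv gr ch p (conv gr ch q r)"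
proof (rule pair_ext)
  fix w h
  show "conv gr ch (conv gr ch p q) r (w, h) = conv gr ch p (conv gr ch q r) (w, h)"
    by (induction w arbitrary: p q r h)
      (simp_all add: conv_Nil conv_Cons lder_conv twist_conv conv_add_left conv_add_right)
qed

lemma foldr_conv_assoc:
  "foldr (conv gr ch) xs (conv gr ch a b) = conv gr ch (foldr (conv gr ch) xs a) b"
  by (induction xs) (simp_all add: conv_assoc)

lemma foldr_conv_smult:
  "foldr (conv gr ch) xs (\<lambda>y. c * a y) = (\<lambda>y. c * foldr (conv gr ch) xs a y)"
  by (induction xs) (simp_all add: conv_smult_right)

lemma lder_tld: "lder k (tld \<psi>) = (\<lambda>_. 0)"
  by (rule ext) (simp add: lder_def tld_def)

lemma twist_tld: "twist ch g (tld \<psi>) = tld (\<lambda>h. \<psi> (g + h))"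
  by (rule ext) (simp add: twist_def tld_def)

lemma tld_conv_tld: "conv gr ch (tld \<psi>) (tld \<psi>') = tld (\<lambda>h. \<psi> h * \<psi>' h)"
proof (rule pair_ext)
  fix w h
  show "conv gr ch (tld \<psi>) (tld \<psi>') (w, h) = tld (\<lambda>h. \<psi> h * \<psi>' h) (w, h)"
    by (cases w) (simp_all add: conv_Nil conv_Cons lder_tld conv_zero_left conv_zero_right tld_def)
qed

lemma tld_one_conv: "conv gr ch (tld (\<lambda>_. 1)) p = p"
proof (rule pair_ext)
  fix w h
  show "conv gr ch (tld (\<lambda>_. 1)) p (w, h) = p (w, h)"
    by (induction w arbitrary: p h)
      (simp_all add: conv_Nil conv_Cons lder_tld conv_zero_left twist_tld,
       simp_all add: tld_def lder_def)
qed

lemma conv_tld_one: "conv gr ch p (tld (\<lambda>_. 1)) = p"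
proof (rule pair_ext)
  fix w h
  show "conv gr ch p (tld (\<lambda>_. 1)) (w, h) = p (w, h)"
    by (induction w arbitrary: p h)
      (simp_all add: conv_Nil conv_Cons lder_tld conv_zero_right, simp_all add: tld_def lder_def)
qed

lemma set_bcop_left_word:
  "(c, (w1, h1), (w2, h2)) \<in> set (bcop gr ch w h) \<Longrightarrow> set w1 \<subseteq> set w"
proof (induction w arbitrary: c w1 h1 w2 h2)
  case Nil
  then show ?case by simp
next
  case (Cons i w)
  then show ?case by fastforce
qed

lemma sum_bcop_tld_left:
  "sum_list (map (\<lambda>(c', x2, x3). c' * tld \<rho> x2 * H x3) (bcop gr ch w h))
     = \<rho> (sum_list (map gr w) + h) * H (w, h)"
proof (induction w arbitrary: \<rho> H)
  case Nil
  then show ?case by (simp add: tld_def)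
next
  case (Cons i w)
  have "(\<lambda>a. sum_list (map (\<lambda>(c', x2, x3). c' * tld \<rho> x2 * H x3) ((\<lambda>(c, (w1, h1), w2, h2).
        [(c, (i # w1, h1), w2, h2),
         (c * prod_list (map (\<lambda>j. ch j (gr i)) w1), (w1, gr i + h1), i # w2, h2)]) a)))
     = (\<lambda>(c', x2, x3). c' * tld (\<lambda>x. \<rho> (gr i + x)) x2 * (\<lambda>x. H (i # fst x, snd x)) x3)"
    by (auto simp: fun_eq_iff tld_def)
  then show ?case
    by (simp add: sum_list_map_concat_map Cons add.assoc)
qed

lemma char_add: "is_char \<psi> \<Longrightarrow> \<psi> (a + b) = \<psi> a * \<psi> b"
  by (simp add: is_char_def)

lemma char_nonzero: "is_char \<psi> \<Longrightarrow> \<psi> a \<noteq> 0"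
  by (simp add: is_char_def)

lemma char_zero: "is_char (\<psi> :: 'g::ab_group_add \<Rightarrow> 'k::field) \<Longrightarrow> \<psi> 0 = 1"
  using char_add[of \<psi> 0 0] char_nonzero[of \<psi> 0] by simp

fun act_coeff :: "(nat \<Rightarrow> 'l \<Rightarrow> 'k::comm_ring_1) \<Rightarrow> (nat \<Rightarrow> 'l) \<Rightarrow> ('l \<Rightarrow> 'k) \<Rightarrow> ('g \<Rightarrow> 'k)
    \<Rightarrow> (nat \<Rightarrow> 'g) \<Rightarrow> nat list \<Rightarrow> 'k" where
  "act_coeff eta z \<rho> \<chi> gs [] = 1"
| "act_coeff eta z \<rho> \<chi> gs (i # v)
     = (1 - eta i (z i) ^ count_list v i * \<rho> (z i) * \<chi> (gs i)) * act_coeff eta z \<rho> \<chi> gs v"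

lemma act_coeff_append:
  "set xs \<inter> set ys = {} \<Longrightarrow>
    act_coeff eta z \<rho> \<chi> gs (xs @ ys) = act_coeff eta z \<rho> \<chi> gs xs * act_coeff eta z \<rho> \<chi> gs ys"
  by (induction xs) auto

lemma act_coeff_replicate:
  "act_coeff eta z \<rho> \<chi> gs (replicate m i) = (\<Prod>k<m. 1 - eta i (z i) ^ k * \<rho> (z i) * \<chi> (gs i))"
  by (induction m) (auto simp: lessThan_Suc mult.commute count_list_eq_length_filter)

lemma mono_Suc: "mono (Suc n) t = mono n t @ replicate (t n) n"
  by (simp add: mono_def)

lemma set_mono: "set (mono n t) \<subseteq> {..<n}"
  by (auto simp: mono_def)

lemma act_coeff_mono:
  "act_coeff eta z \<rho> \<chi> gs (mono n t) = (\<Prod>i<n. \<Prod>k<t i. 1 - eta i (z i) ^ k * \<rho> (z i) * \<chi> (gs i))"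
proof (induction n)
  case 0
  then show ?case by (simp add: mono_def)
next
  case (Suc n)
  have "set (mono n t) \<inter> set (replicate (t n) n) = {}"
    using set_mono[of n t] by auto
  then show ?case
    by (simp add: mono_Suc act_coeff_append act_coeff_replicate Suc lessThan_Suc mult.commute)
qed

locale hopf_pairing =
  fixes n :: nat and z :: "nat \<Rightarrow> 'l::ab_group_add" and gs :: "nat \<Rightarrow> 'g::ab_group_add"
    and eta :: "nat \<Rightarrow> 'l \<Rightarrow> 'k::field" and chis :: "nat \<Rightarrow> 'g \<Rightarrow> 'k"
    and \<phi> :: "'l \<Rightarrow> 'g \<Rightarrow> 'k" and l :: "nat \<Rightarrow> 'k" and \<rho> :: "'l \<Rightarrow> 'k"
  assumes phi_char: "is_char (\<phi> a)"
    and phi_add: "\<phi> (a + b) c = \<phi> a c * \<phi> b c"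
    and phi_z: "i < n \<Longrightarrow> \<phi> (z i) c = inverse (chis i c)"
    and eta_eq_phi: "i < n \<Longrightarrow> eta i a = \<phi> a (gs i)"
    and eta_z_mult_inverse: "i < n \<Longrightarrow> j < n \<Longrightarrow> i \<noteq> j \<Longrightarrow> eta j (z i) * eta i (z j) = 1"
    and rho_char: "is_char \<rho>"
begin

abbreviation conv_dual :: "(nat list \<times> 'g \<Rightarrow> 'k) \<Rightarrow> (nat list \<times> 'g \<Rightarrow> 'k) \<Rightarrow> nat list \<times> 'g \<Rightarrow> 'k"
    (infixl "\<star>" 70) where
  "p \<star> q \<equiv> conv gs chis p q"

abbreviation "\<Phi>u \<equiv> Phi_u l \<phi> z"
abbreviation "\<Phi> \<equiv> PhiU gs chis l \<phi> z"
abbreviation "ACT \<equiv> act z eta gs chis l \<phi> \<rho>"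

lemma phi_zero: "\<phi> 0 = (\<lambda>_. 1)"
proof
  fix c
  have "\<phi> 0 c = \<phi> 0 c * \<phi> 0 c"
    using phi_add[of 0 0 c] by simp
  then show "\<phi> 0 c = 1"
    using char_nonzero[OF phi_char, of 0 c] by simp
qed

lemma phi_add_fun: "\<phi> (a + b) = (\<lambda>c. \<phi> a c * \<phi> b c)"
  using phi_add by auto

lemma phi_mult_phi_neg: "\<phi> a c * \<phi> (- a) c = 1"
  using phi_add[of a "- a" c] by (simp add: phi_zero)

lemma lder_Phi_u: "lder k (\<Phi>u j) = (if k = j then (\<lambda>y. l j * tld (\<phi> (z j)) y) else (\<lambda>_. 0))"
  by (auto simp: fun_eq_iff lder_def Phi_u_def tld_def)

lemma twist_Phi_u:
  assumes j: "j < n"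
  shows "twist chis g (\<Phi>u j) = \<Phi>u j"
proof
  fix x :: "nat list \<times> 'g"
  have "\<phi> (z j) (g + snd x) = inverse (chis j g) * \<phi> (z j) (snd x)"
    using char_add[OF phi_char] phi_z[OF j] by simp
  moreover have "chis j g \<noteq> 0"
    using char_nonzero[OF phi_char, of "z j" g] phi_z[OF j] by auto
  ultimately show "twist chis g (\<Phi>u j) x = \<Phi>u j x"
    by (auto simp: twist_def Phi_u_def)
qed

lemma tld_conv_Phi_u:
  assumes "is_char \<psi>"
  shows "tld \<psi> \<star> \<Phi>u i = (\<lambda>x. \<psi> (gs i) * (\<Phi>u i \<star> tld \<psi>) x)"
proof (rule pair_ext)
  fix w h
  show "(tld \<psi> \<star> \<Phi>u i) (w, h) = \<psi> (gs i) * (\<Phi>u i \<star> tld \<psi>) (w, h)"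
    using assms
    by (cases w) (simp_all add: conv_Nil Phi_u_def conv_Cons lder_tld lder_Phi_u twist_tld
        conv_zero_left conv_zero_right conv_smult_right conv_smult_left tld_conv_tld char_add,
        simp add: tld_def)
qed

lemma Phi_u_conv_Phi_u_Cons:
  assumes "i < n" "j < n"
  shows "(\<Phi>u j \<star> \<Phi>u i) (k # w, h)
    = (if k = j then l j * eta i (z j) * (\<Phi>u i \<star> tld (\<phi> (z j))) (w, h) else 0)
      + (if k = i then l i * (\<Phi>u j \<star> tld (\<phi> (z i))) (w, h) else 0)"
  using assms
  by (simp add: conv_Cons twist_Phi_u lder_Phi_u tld_conv_Phi_u[OF phi_char] eta_eq_phi
      conv_smult_left conv_smult_right conv_zero_left conv_zero_right)

lemma Phi_u_qcomm:
  assumes "i < n" "j < n" "i \<noteq> j"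
  shows "\<Phi>u j \<star> \<Phi>u i = (\<lambda>x. eta i (z j) * (\<Phi>u i \<star> \<Phi>u j) x)"
proof (rule pair_ext)
  fix w h
  have q: "eta i (z j) * eta j (z i) = 1"
    using eta_z_mult_inverse[OF assms] by (simp add: mult.commute)
  show "(\<Phi>u j \<star> \<Phi>u i) (w, h) = eta i (z j) * (\<Phi>u i \<star> \<Phi>u j) (w, h)"
  proof (cases w)
    case Nil
    then show ?thesis by (simp add: conv_Nil Phi_u_def)
  next
    case (Cons k w')
    then show ?thesis
      using assms q by (simp add: Phi_u_conv_Phi_u_Cons algebra_simps)
  qed
qed


lemma PhiU_eq: "\<Phi> (v, a) = foldr (\<star>) (map \<Phi>u v) (tld (\<phi> a))"
  by (simp add: PhiU_def)

lemma prod_phi_z_eq_prod_eta: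
  "set v \<subseteq> {..<n} \<Longrightarrow>
    prod_list (map (\<lambda>j. \<phi> (z i) (gs j)) v) = prod_list (map (\<lambda>j. eta j (z i)) v)"
  using eta_eq_phi by (intro arg_cong[where f=prod_list] map_cong) auto

lemma PhiU_eq_conv_tld: "\<Phi> (v, a) = \<Phi> (v, 0) \<star> tld (\<phi> a)"
  by (simp add: PhiU_eq foldr_conv_assoc[symmetric] tld_conv_tld phi_zero)

lemma tld_conv_foldr_Phi_u:
  assumes "is_char \<psi>"
  shows "tld \<psi> \<star> foldr (\<star>) (map \<Phi>u v) q
    = (\<lambda>x. prod_list (map (\<lambda>j. \<psi> (gs j)) v) * foldr (\<star>) (map \<Phi>u v) (tld \<psi> \<star> q) x)"
proof (induction v)
  case Nil
  then show ?case by simp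
next
  case (Cons j v)
  have "tld \<psi> \<star> foldr (\<star>) (map \<Phi>u (j # v)) q = (tld \<psi> \<star> \<Phi>u j) \<star> foldr (\<star>) (map \<Phi>u v) q"
    by (simp add: conv_assoc)
  also have "\<dots> = (\<lambda>x. \<psi> (gs j) * (\<Phi>u j \<star> (tld \<psi> \<star> foldr (\<star>) (map \<Phi>u v) q)) x)"
    using assms by (simp add: tld_conv_Phi_u conv_smult_left conv_assoc)
  also have "\<dots> = (\<lambda>x. prod_list (map (\<lambda>j. \<psi> (gs j)) (j # v))
      * foldr (\<star>) (map \<Phi>u (j # v)) (tld \<psi> \<star> q) x)"
    using Cons by (simp add: conv_smult_right mult.assoc)
  finally show ?case .
qed

lemma tld_phi_conv_PhiU:
  "tld (\<phi> a) \<star> \<Phi> (v, b) = (\<lambda>x. prod_list (map (\<lambda>j. \<phi> a (gs j)) v) * \<Phi> (v, a + b) x)"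
  by (simp add: PhiU_eq tld_conv_foldr_Phi_u[OF phi_char] tld_conv_tld phi_add_fun)

lemma PhiU_conv_tld_phi_conv_Phi_u:
  "\<Phi> (v, m) \<star> tld (\<phi> b) \<star> \<Phi>u i = (\<lambda>x. \<phi> (m + b) (gs i) * \<Phi> (v @ [i], m + b) x)"
proof -
  have "\<Phi> (v, m) \<star> tld (\<phi> b) \<star> \<Phi>u i = foldr (\<star>) (map \<Phi>u v) (tld (\<phi> (m + b)) \<star> \<Phi>u i)"
    by (simp add: PhiU_eq foldr_conv_assoc[symmetric] conv_assoc tld_conv_tld phi_add_fun)
  also have "\<dots> = (\<lambda>x. \<phi> (m + b) (gs i) * \<Phi> (v @ [i], m + b) x)"
    by (simp add: tld_conv_Phi_u[OF phi_char] foldr_conv_smult PhiU_eq)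
  finally show ?thesis .
qed

text \<open>Each letter \<open>j \<noteq> i\<close> of \<open>v\<close> contributes \<open>q\<^sub>j\<^sub>i\<close> when \<open>\<Phi>(u\<^sub>i)\<close> moves across it,
  cancelled by the factor \<open>q\<^sub>i\<^sub>j\<close> on the left; each letter \<open>i\<close> contributes \<open>q\<^sub>i\<^sub>i\<close>.\<close>
lemma PhiU_conv_Phi_u_qcomm:
  assumes "set v \<subseteq> {..<n}" "i < n"
  shows "(\<lambda>x. prod_list (map (\<lambda>j. eta j (z i)) v) * (\<Phi> (v, 0) \<star> \<Phi>u i) x)
    = (\<lambda>x. eta i (z i) ^ count_list v i * (\<Phi>u i \<star> \<Phi> (v, 0)) x)"
  using assms
proof (induction v)
  case Nil
  then show ?case
    using tld_conv_Phi_u[OF phi_char, of 0 i] by (simp add: PhiU_eq phi_zero)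
next
  case (Cons j v)
  then have j: "j < n" and IH: "(\<lambda>x. prod_list (map (\<lambda>j. eta j (z i)) v) * (\<Phi> (v, 0) \<star> \<Phi>u i) x)
      = (\<lambda>x. eta i (z i) ^ count_list v i * (\<Phi>u i \<star> \<Phi> (v, 0)) x)"
    by auto
  have "(\<lambda>x. prod_list (map (\<lambda>j. eta j (z i)) (j # v)) * (\<Phi> (j # v, 0) \<star> \<Phi>u i) x)
     = (\<lambda>x. eta j (z i)
         * (\<Phi>u j \<star> (\<lambda>x. prod_list (map (\<lambda>j. eta j (z i)) v) * (\<Phi> (v, 0) \<star> \<Phi>u i) x)) x)"
    by (simp add: PhiU_eq conv_assoc conv_smult_right mult.assoc)
  also have "\<dots> = (\<lambda>x. eta j (z i) * eta i (z i) ^ count_list v i * (\<Phi>u j \<star> \<Phi>u i \<star> \<Phi> (v, 0)) x)"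
    unfolding IH by (simp add: conv_smult_right conv_assoc mult.assoc)
  also have "\<dots> = (\<lambda>x. eta i (z i) ^ count_list (j # v) i * (\<Phi>u i \<star> \<Phi> (j # v, 0)) x)"
  proof (cases "j = i")
    case True
    then show ?thesis by (simp add: PhiU_eq conv_assoc)
  next
    case False
    have "eta j (z i) * eta i (z j) = 1"
      using eta_z_mult_inverse Cons.prems j False by auto
    then show ?thesis
      using False by (simp add: Phi_u_qcomm[OF \<open>i < n\<close> j False[symmetric]] conv_smult_left PhiU_eq
          conv_assoc fun_eq_iff algebra_simps)
  qed
  finally show ?case .
qed

text \<open>The term of \<open>u \<cdot>\<^sub>\<rho> p\<close> coming from the summand \<open>c u\<^sub>1 \<otimes> u\<^sub>2\<close> of \<open>\<Delta>(u)\<close>, with \<open>\<rho>~\<close>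
  already applied to the first factor of \<open>\<Delta>(u\<^sub>2)\<close>, which leaves only \<open>\<rho>(deg u\<^sub>2)\<close>.\<close>
definition act_summand :: "'k \<Rightarrow> nat list \<times> 'l \<Rightarrow> nat list \<times> 'l
    \<Rightarrow> (nat list \<times> 'g \<Rightarrow> 'k) \<Rightarrow> nat list \<times> 'g \<Rightarrow> 'k" where
  "act_summand c u1 u2 p = (\<lambda>x.
     c * \<rho> (sum_list (map z (fst u2)) + snd u2) * fst (antip z eta (fst u2) (snd u2))
       * (\<Phi> u1 \<star> p \<star> \<Phi> (snd (antip z eta (fst u2) (snd u2)))) x)"

lemma act_eq_sum_summands:
  "ACT (v, m) p
    = (\<lambda>x. sum_list (map (\<lambda>(c, u1, u2). act_summand c u1 u2 p x) (bcop z eta v m)))"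
proof (rule ext)
  fix x
  have "sum_list (map (\<lambda>(c', u2, u3). case antip z eta (fst u3) (snd u3) of (d, s) \<Rightarrow>
           c * c' * tld \<rho> u2 * d * (\<Phi> u1 \<star> p \<star> \<Phi> s) x) (bcop z eta (fst u) (snd u)))
      = act_summand c u1 u p x" for c u1 u
  proof -
    have split: "(\<lambda>(c', u2, u3). case antip z eta (fst u3) (snd u3) of (d, s) \<Rightarrow>
           c * c' * tld \<rho> u2 * d * (\<Phi> u1 \<star> p \<star> \<Phi> s) x)
      = (\<lambda>(c', u2, u3). c' * tld \<rho> u2 * (c * fst (antip z eta (fst u3) (snd u3))
           * (\<Phi> u1 \<star> p \<star> \<Phi> (snd (antip z eta (fst u3) (snd u3)))) x))"
      by (auto simp: fun_eq_iff split: prod.split)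
    show ?thesis
      unfolding split sum_bcop_tld_left by (simp add: act_summand_def algebra_simps)
  qed
  then show "ACT (v, m) p x
      = sum_list (map (\<lambda>(c, u1, u2). act_summand c u1 u2 p x) (bcop z eta v m))"
    by (simp add: act_def split_def)
qed

lemma act_summand_Cons_left:
  "act_summand c (i # w1, h1) u2 p = \<Phi>u i \<star> act_summand c (w1, h1) u2 p"
  by (simp add: act_summand_def conv_smult_right PhiU_eq conv_assoc)

lemma act_summand_Cons_right:
  assumes "set w1 \<subseteq> {..<n}" "i < n"
  shows "act_summand (c * prod_list (map (\<lambda>j. eta j (z i)) w1)) (w1, z i + h1) (i # w2, h2) p
    = (\<lambda>x. - (\<rho> (z i)
        * (tld (\<phi> (z i)) \<star> (act_summand c (w1, h1) (w2, h2) p \<star> tld (\<phi> (- z i))) \<star> \<Phi>u i) x))"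
proof -
  obtain d v m where antip_w2: "antip z eta w2 h2 = (d, (v, m))"
    by (metis prod_cases3)
  have "tld (\<phi> (z i)) \<star> (\<Phi> (w1, h1) \<star> p \<star> \<Phi> (v, m) \<star> tld (\<phi> (- z i))) \<star> \<Phi>u i
      = (tld (\<phi> (z i)) \<star> \<Phi> (w1, h1)) \<star> p \<star> (\<Phi> (v, m) \<star> tld (\<phi> (- z i)) \<star> \<Phi>u i)"
    by (simp add: conv_assoc)
  also have "\<dots> = (\<lambda>x. prod_list (map (\<lambda>j. eta j (z i)) w1) * eta i (m - z i)
          * (\<Phi> (w1, z i + h1) \<star> p \<star> \<Phi> (v @ [i], m - z i)) x)"
    using eta_eq_phi[OF assms(2)]
    by (simp add: prod_phi_z_eq_prod_eta[OF assms(1)] tld_phi_conv_PhiU PhiU_conv_tld_phi_conv_Phi_u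
        conv_smult_left conv_smult_right mult.assoc)
  moreover have "\<rho> (sum_list (map z (i # w2)) + h2) = \<rho> (z i) * \<rho> (sum_list (map z w2) + h2)"
    using char_add[OF rho_char, of "z i" "sum_list (map z w2) + h2"] by (simp add: add.assoc)
  ultimately show ?thesis
    by (simp add: act_summand_def antip_w2 conv_smult_left conv_smult_right algebra_simps)
qed

lemma act_Cons:
  assumes v: "set v \<subseteq> {..<n}" and i: "i < n"
  shows "ACT (i # v, 0) p = (\<lambda>x. (\<Phi>u i \<star> ACT (v, 0) p) x
     - \<rho> (z i) * (tld (\<phi> (z i)) \<star> (ACT (v, 0) p \<star> tld (\<phi> (- z i))) \<star> \<Phi>u i) x)"
proof (rule ext)
  fix x
  define S where "S = (\<lambda>(c, u1, u2). act_summand c u1 u2 p)"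
  define R where "R = (\<lambda>q. tld (\<phi> (z i)) \<star> (q \<star> tld (\<phi> (- z i))) \<star> \<Phi>u i)"
  have ACT_eq: "ACT (w, 0) p = (\<lambda>x. sum_list (map (\<lambda>a. S a x) (bcop z eta w 0)))" for w
    by (simp add: act_eq_sum_summands S_def split_def)
  have pair: "S (c, (i # w1, h1), w2, h2) x
        + S (c * prod_list (map (\<lambda>j. eta j (z i)) w1), (w1, z i + h1), i # w2, h2) x
      = (\<Phi>u i \<star> S (c, (w1, h1), w2, h2)) x - \<rho> (z i) * R (S (c, (w1, h1), w2, h2)) x"
    if "(c, (w1, h1), w2, h2) \<in> set (bcop z eta v 0)" for c w1 h1 w2 h2
  proof -
    have "set w1 \<subseteq> {..<n}"
      using set_bcop_left_word[OF that] v by blast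
    then show ?thesis
      by (simp add: S_def R_def act_summand_Cons_left act_summand_Cons_right[OF _ i])
  qed
  have "ACT (i # v, 0) p x
      = sum_list (map (\<lambda>a. (\<Phi>u i \<star> S a) x - \<rho> (z i) * R (S a) x) (bcop z eta v 0))"
    unfolding ACT_eq bcop.simps sum_list_map_concat_map
    by (rule arg_cong[where f=sum_list], rule map_cong[OF refl]) (auto simp: pair)
  also have "\<dots> = (\<Phi>u i \<star> ACT (v, 0) p) x - \<rho> (z i) * R (ACT (v, 0) p) x"
    by (simp add: ACT_eq R_def conv_sum_list_left conv_sum_list_right sum_list_subtractf
        sum_list_const_mult)
  finally show "ACT (i # v, 0) p x = (\<Phi>u i \<star> ACT (v, 0) p) x
     - \<rho> (z i) * (tld (\<phi> (z i)) \<star> (ACT (v, 0) p \<star> tld (\<phi> (- z i))) \<star> \<Phi>u i) x"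
    by (simp add: R_def)
qed

lemma act_Nil: "ACT ([], 0) p = p"
  by (simp add: act_eq_sum_summands act_summand_def PhiU_eq phi_zero tld_one_conv conv_tld_one
      char_zero[OF rho_char])

lemma conj_phi_z_conv_Phi_u:
  assumes v: "set v \<subseteq> {..<n}" and i: "i < n" and \<chi>: "is_char \<chi>"
  shows "tld (\<phi> (z i)) \<star> (\<Phi> (v, 0) \<star> tld \<chi> \<star> tld (\<phi> (- z i))) \<star> \<Phi>u i
    = (\<lambda>x. \<chi> (gs i) * eta i (z i) ^ count_list v i * (\<Phi> (i # v, 0) \<star> tld \<chi>) x)"
proof -
  have cancel: "tld (\<phi> (z i)) \<star> (tld \<chi> \<star> (tld (\<phi> (- z i)) \<star> \<Phi>u i)) = tld \<chi> \<star> \<Phi>u i"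
  proof -
    have "(\<lambda>h. \<phi> (z i) h * (\<chi> h * \<phi> (- z i) h)) = \<chi>"
      using phi_mult_phi_neg by (simp add: fun_eq_iff mult.left_commute)
    then show ?thesis
      by (simp add: conv_assoc[symmetric] tld_conv_tld)
  qed
  have qcomm: "(\<lambda>x. prod_list (map (\<lambda>j. eta j (z i)) v) * (\<Phi> (v, 0) \<star> \<Phi>u i) x) \<star> tld \<chi>
      = (\<lambda>x. eta i (z i) ^ count_list v i * (\<Phi>u i \<star> \<Phi> (v, 0)) x) \<star> tld \<chi>"
    by (simp only: PhiU_conv_Phi_u_qcomm[OF v i])
  have "tld (\<phi> (z i)) \<star> (\<Phi> (v, 0) \<star> tld \<chi> \<star> tld (\<phi> (- z i))) \<star> \<Phi>u i
      = (tld (\<phi> (z i)) \<star> \<Phi> (v, 0)) \<star> (tld \<chi> \<star> (tld (\<phi> (- z i)) \<star> \<Phi>u i))"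
    by (simp add: conv_assoc)
  also have "\<dots> = (\<lambda>x. prod_list (map (\<lambda>j. eta j (z i)) v) * (\<Phi> (v, 0) \<star> (tld \<chi> \<star> \<Phi>u i)) x)"
    by (simp add: tld_phi_conv_PhiU prod_phi_z_eq_prod_eta[OF v] PhiU_eq_conv_tld[of v "z i"]
        conv_smult_left conv_assoc cancel)
  also have "\<dots> = (\<lambda>x. \<chi> (gs i)
      * ((\<lambda>x. prod_list (map (\<lambda>j. eta j (z i)) v) * (\<Phi> (v, 0) \<star> \<Phi>u i) x) \<star> tld \<chi>) x)"
    by (simp add: tld_conv_Phi_u[OF \<chi>] conv_smult_left conv_smult_right conv_assoc algebra_simps)
  also have "\<dots> = (\<lambda>x. \<chi> (gs i) * eta i (z i) ^ count_list v i * (\<Phi> (i # v, 0) \<star> tld \<chi>) x)"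
    unfolding qcomm by (simp add: conv_smult_left PhiU_eq conv_assoc mult.assoc)
  finally show ?thesis .
qed

lemma act_tld:
  assumes "set v \<subseteq> {..<n}" and \<chi>: "is_char \<chi>"
  shows "ACT (v, 0) (tld \<chi>) = (\<lambda>x. act_coeff eta z \<rho> \<chi> gs v * (\<Phi> (v, 0) \<star> tld \<chi>) x)"
  using assms(1)
proof (induction v)
  case Nil
  then show ?case by (simp add: act_Nil PhiU_eq phi_zero tld_one_conv)
next
  case (Cons i v)
  then have v: "set v \<subseteq> {..<n}" and i: "i < n"
    by auto
  have "\<Phi>u i \<star> (\<Phi> (v, 0) \<star> tld \<chi>) = \<Phi> (i # v, 0) \<star> tld \<chi>"
    by (simp add: PhiU_eq conv_assoc)
  then show ?case
    using conj_phi_z_conv_Phi_u[OF v i \<chi>]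
    by (simp add: act_Cons[OF v i] Cons.IH[OF v] conv_smult_left conv_smult_right algebra_simps)
qed

end

theorem corollary2p5:
  fixes n :: nat
    and z :: "nat \<Rightarrow> 'l::ab_group_add" and gs :: "nat \<Rightarrow> 'g::ab_group_add"
    and eta :: "nat \<Rightarrow> 'l \<Rightarrow> 'k::field_char_0" and chis :: "nat \<Rightarrow> 'g \<Rightarrow> 'k"
    and \<phi> :: "'l \<Rightarrow> 'g \<Rightarrow> 'k" and l :: "nat \<Rightarrow> 'k"
    and \<rho> :: "'l \<Rightarrow> 'k" and \<chi> :: "'g \<Rightarrow> 'k" and t :: "nat \<Rightarrow> nat"
  assumes "alg_closed_field TYPE('k)"
    and "n \<ge> 1"
    and "\<forall>i<n. is_char (eta i) \<and> (\<exists>a. eta i a \<noteq> 1)"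
    and "\<forall>i<n. is_char (chis i) \<and> (\<exists>a. chis i a \<noteq> 1)"
    and "\<forall>a. is_char (\<phi> a)"
    and "\<forall>a b c. \<phi> (a + b) c = \<phi> a c * \<phi> b c"
    and "\<forall>i<n. \<forall>c. \<phi> (z i) c = inverse (chis i c)"
    and "\<forall>i<n. \<forall>a. eta i a = \<phi> a (gs i)"
    and "\<forall>i<n. l i \<noteq> 0"
    and "is_char \<rho>" and "is_char \<chi>"
    and "\<forall>i<n. \<forall>m::nat. m > 0 \<longrightarrow> (eta i (z i)) ^ m \<noteq> 1"
    and "\<forall>i<n. \<forall>j<n. i \<noteq> j \<longrightarrow> eta j (z i) * eta i (z j) = 1"
  shows "\<forall>w g. set w \<subseteq> {..<n} \<longrightarrow>
     act z eta gs chis l \<phi> \<rho> (mono n t, 0) (tld \<chi>) (w, g) =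
     (\<Prod>i<n. \<Prod>li<t i. 1 - (eta i (z i)) ^ li * \<rho> (z i) * \<chi> (gs i))
       * conv gs chis (PhiU gs chis l \<phi> z (mono n t, 0)) (tld \<chi>) (w, g)"
proof -
  \<comment> \<open>The identity needs none of: algebraic closedness, nontrivial characters, \<open>l\<^sub>i \<noteq> 0\<close>,
    or \<open>q\<^sub>i\<^sub>i\<close> not being a root of unity.\<close>
  interpret hopf_pairing n z gs eta chis \<phi> l \<rho>
    using assms by unfold_locales auto
  show ?thesis
    using act_tld[OF set_mono assms(11)] by (simp add: act_coeff_mono)
qed

end
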